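(* Suppose that a graph property $\Pi$ has a canonical size-oblivious $\varepsilon$-tester with sample complexity $s=s(\varepsilon)$. Then for every $n\ge s^4$ and every $n$-vertex graph $G$ which is $\varepsilon$-far from $\Pi$, if $U$ is chosen uniformly at random from the $s^4$-element subsets of $V(G)$, then $\mathbb{P}[G[U]\in\Pi]\le e^{-\Omega(s)}$, where the constant implicit in $\Omega$ is absolute (independent of $\Pi$, $\varepsilon$, $n$ and $G$).
   Context: Dense graph model: graphs are given as adjacency matrices; an $n$-vertex graph is $\varepsilon$-far from $\Pi$ if at least $\varepsilon n^2$ adjacency-matrix entries must be changed to obtain a graph in $\Pi$. An $\varepsilon$-tester for $\Pi$ accepts graphs in $\Pi$ with probability at least $2/3$ and rejects graphs $\varepsilon$-far from $\Pi$ with probability at least $2/3$. A tester is canonical if it samples a uniformly random set of $s$ vertices, queries all pairs among them, and decides based only on the isomorphism class of the induced subgraph on the sample; $s$ is its sample complexity. It is size-oblivious if its operation depends only on $\varepsilon$, not on the number of vertices $n$ (so here $s$ depends only on $\varepsilon$). $G[U]$ denotes the subgraph of $G$ induced on $U$. *)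

theory Defs
  imports Complex_Main
begin

type_synonym graph = "nat set \<times> (nat \<Rightarrow> nat \<Rightarrow> bool)"

definition verts :: "graph \<Rightarrow> nat set" where "verts G = fst G"
definition adj :: "graph \<Rightarrow> nat \<Rightarrow> nat \<Rightarrow> bool" where "adj G = snd G"

definition is_graph :: "graph \<Rightarrow> bool" where
  "is_graph G \<longleftrightarrow> finite (verts G)
     \<and> (\<forall>u v. adj G u v \<longrightarrow> u \<in> verts G \<and> v \<in> verts G)
     \<and> (\<forall>u v. adj G u v \<longleftrightarrow> adj G v u)
     \<and> (\<forall>u. \<not> adj G u u)"

definition graph_iso :: "graph \<Rightarrow> graph \<Rightarrow> bool" where
  "graph_iso G H \<longleftrightarrow> (\<exists>f. bij_betw f (verts G) (verts H)
     \<and> (\<forall>u\<in>verts G. \<forall>v\<in>verts G. adj G u v \<longleftrightarrow> adj H (f u) (f v)))"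

definition induced :: "graph \<Rightarrow> nat set \<Rightarrow> graph" where
  "induced G U = (U, \<lambda>u v. adj G u v \<and> u \<in> U \<and> v \<in> U)"

definition graph_property :: "graph set \<Rightarrow> bool" where
  "graph_property P \<longleftrightarrow> (\<forall>G H. is_graph G \<and> is_graph H \<and> graph_iso G H \<and> G \<in> P \<longrightarrow> H \<in> P)"

definition adj_dist :: "graph \<Rightarrow> graph \<Rightarrow> nat" where
  "adj_dist G H = card {(u, v). u \<in> verts G \<and> v \<in> verts G \<and> adj G u v \<noteq> adj H u v}"

definition eps_far :: "real \<Rightarrow> graph set \<Rightarrow> graph \<Rightarrow> bool" where
  "eps_far eps P G \<longleftrightarrow> (\<forall>H. is_graph H \<and> verts H = verts G \<and> H \<in> P \<longrightarrow>
      real (adj_dist G H) \<ge> eps * (real (card (verts G)))^2)"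

definition subset_prob :: "nat set \<Rightarrow> nat \<Rightarrow> (nat set \<Rightarrow> bool) \<Rightarrow> real" where
  "subset_prob V k Q = real (card {U. U \<subseteq> V \<and> card U = k \<and> Q U}) / real (card V choose k)"

text \<open>A canonical size-oblivious eps-tester for P with sample complexity s: it samples a
uniformly random s-subset S, and accepts iff G[S] lies in the fixed set A of graphs,
which is closed under isomorphism (the decision depends only on the isomorphism class).
s and A depend only on eps (not on the number of vertices n), and the tester works for
every graph with at least s vertices.\<close>
definition canonical_tester :: "graph set \<Rightarrow> real \<Rightarrow> nat \<Rightarrow> graph set \<Rightarrow> bool" where
  "canonical_tester P eps s A \<longleftrightarrow>
     graph_property A \<and>
     (\<forall>G. is_graph G \<and> card (verts G) \<ge> s \<longrightarrow>
        (G \<in> P \<longrightarrow> subset_prob (verts G) s (\<lambda>S. induced G S \<in> A) \<ge> 2/3) \<and>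
        (eps_far eps P G \<longrightarrow> subset_prob (verts G) s (\<lambda>S. induced G S \<notin> A) \<ge> 2/3))"

end

theory Submission
  imports Defs
begin

text \<open>Let F be the family of s-sets on which the tester accepts. As G is eps-far, F holds at
most a third of the s-subsets of V(G); if G[U] \<in> P, running the tester on G[U] shows that F holds
at least two thirds of the s-subsets of U, i.e. U is rich. For m = s^4, a rich m-set contains at
least (C(m,s)/2)^s sequences of s pairwise disjoint members of F: the s^2 points used by a
partial sequence meet at most C(m,s)/6 of the s-subsets. Conversely, each of the at most
|F|^s such sequences lies in C(n - s^2, m - s^2) of the m-sets, and containing a fixed s^2-set is
at most as likely as containing s fixed s-sets independently. Double counting leaves at most a
(2/3)^s fraction of rich m-sets.\<close>

lemma card_supersets_of_card:
  assumes "finite V" "W \<subseteq> V" "card W \<le> m"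
  shows "card {U. U \<subseteq> V \<and> card U = m \<and> W \<subseteq> U} = (card V - card W) choose (m - card W)"
proof -
  have "finite W" using assms finite_subset by blast
  have "bij_betw (\<lambda>U. U - W) {U. U \<subseteq> V \<and> card U = m \<and> W \<subseteq> U} {T. T \<subseteq> V - W \<and> card T = m - card W}"
  proof (rule bij_betw_byWitness[where f' = "\<lambda>T. T \<union> W"])
    show "(\<lambda>U. U - W) ` {U. U \<subseteq> V \<and> card U = m \<and> W \<subseteq> U} \<subseteq> {T. T \<subseteq> V - W \<and> card T = m - card W}"
      using \<open>finite W\<close> by (auto simp: card_Diff_subset)
    show "(\<lambda>T. T \<union> W) ` {T. T \<subseteq> V - W \<and> card T = m - card W} \<subseteq> {U. U \<subseteq> V \<and> card U = m \<and> W \<subseteq> U}"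
    proof clarify
      fix T assume T: "T \<subseteq> V - W" "card T = m - card W"
      then have "finite T" using assms finite_subset by blast
      then have "card (T \<union> W) = card T + card W" using T \<open>finite W\<close> by (intro card_Un_disjoint) auto
      then show "T \<union> W \<subseteq> V \<and> card (T \<union> W) = m \<and> W \<subseteq> T \<union> W" using T assms by auto
    qed
  qed auto
  then have "card {U. U \<subseteq> V \<and> card U = m \<and> W \<subseteq> U} = card {T. T \<subseteq> V - W \<and> card T = m - card W}"
    by (rule bij_betw_same_card)
  also have "\<dots> = card (V - W) choose (m - card W)" using assms by (intro n_subsets) auto
  also have "card (V - W) = card V - card W" using assms \<open>finite W\<close> by (simp add: card_Diff_subset)
  finally show ?thesis .
qed

lemma choose_diff_one_eq:
  assumes "s < x"
  shows "real ((x - 1) choose s) = (1 - real s / real x) * real (x choose s)"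
proof -
  have "real ((x - 1) choose s) * real x = (real x - real s) * real (x choose s)"
    using binomial_absorb_comp[of x s] assms by (metis mult.commute of_nat_diff of_nat_mult less_imp_le)
  then show ?thesis using assms by (simp add: field_simps)
qed

lemma choose_diff_ratio_mono:
  assumes "a + s \<le> m" "m \<le> n"
  shows "real ((m - a) choose s) * real (n choose s) \<le> real (m choose s) * real ((n - a) choose s)"
  using assms
proof (induction a)
  case 0
  then show ?case by simp
next
  case (Suc a)
  define x y where "x = m - a" and "y = n - a"
  have xy: "s < x" "x \<le> y" using Suc.prems by (auto simp: x_def y_def)
  have ratios: "0 \<le> 1 - real s / real x" "1 - real s / real x \<le> 1 - real s / real y"
    using xy by (auto simp: field_simps intro!: mult_left_mono)
  have "real ((x - 1) choose s) * real (n choose s) = (1 - real s / real x) * (real (x choose s) * real (n choose s))"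
    using choose_diff_one_eq[of s x] xy by simp
  also have "\<dots> \<le> (1 - real s / real x) * (real (m choose s) * real (y choose s))"
    using Suc ratios by (intro mult_left_mono) (auto simp: x_def y_def)
  also have "\<dots> \<le> (1 - real s / real y) * (real (m choose s) * real (y choose s))"
    using ratios by (intro mult_right_mono) auto
  also have "\<dots> = real (m choose s) * real ((y - 1) choose s)"
    using choose_diff_one_eq[of s y] xy by simp
  finally show ?case by (simp add: x_def y_def)
qed

lemma choose_superset_step_le:
  assumes "a + s \<le> m" "m \<le> n"
  shows "real ((n - a - s) choose (m - a - s)) * real (n choose s) \<le> real ((n - a) choose (m - a)) * real (m choose s)"
proof -
  define N M where "N = n - a" and "M = m - a"
  have "s \<le> M" "M \<le> N" using assms by (auto simp: N_def M_def)
  then have "real (N choose s) * (real ((N - s) choose (M - s)) * real (n choose s))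
      = real (N choose M) * (real (M choose s) * real (n choose s))"
    by (simp add: choose_mult flip: of_nat_mult)
  also have "\<dots> \<le> real (N choose M) * (real (m choose s) * real (N choose s))"
    using choose_diff_ratio_mono[OF assms] by (intro mult_left_mono) (auto simp: N_def M_def)
  finally have "real (N choose s) * (real ((N - s) choose (M - s)) * real (n choose s))
      \<le> real (N choose s) * (real (N choose M) * real (m choose s))" by (simp add: ac_simps)
  moreover have "real (N choose s) > 0" using \<open>s \<le> M\<close> \<open>M \<le> N\<close> by simp
  ultimately show ?thesis by (simp add: N_def M_def)
qed

text \<open>Divided by C(n,m) C(n,s)^j this says that a random m-subset of an n-set contains a fixed
(j s)-set with probability at most the j-th power of the probability that it contains a fixed s-set.\<close>

lemma choose_superset_power_le:
  assumes "j * s \<le> m" "m \<le> n"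
  shows "real ((n - j * s) choose (m - j * s)) * real (n choose s) ^ j \<le> real (n choose m) * real (m choose s) ^ j"
  using assms
proof (induction j)
  case 0
  then show ?case by simp
next
  case (Suc j)
  have "real ((n - Suc j * s) choose (m - Suc j * s)) * real (n choose s) ^ Suc j
     = (real ((n - j * s - s) choose (m - j * s - s)) * real (n choose s)) * real (n choose s) ^ j"
    by (simp add: diff_diff_add algebra_simps)
  also have "\<dots> \<le> (real ((n - j * s) choose (m - j * s)) * real (m choose s)) * real (n choose s) ^ j"
    using Suc.prems by (intro mult_right_mono choose_superset_step_le) auto
  also have "\<dots> = (real ((n - j * s) choose (m - j * s)) * real (n choose s) ^ j) * real (m choose s)"
    by simp
  also have "\<dots> \<le> (real (n choose m) * real (m choose s) ^ j) * real (m choose s)"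
    using Suc by (intro mult_right_mono) auto
  finally show ?case by (simp add: ac_simps)
qed

fun disjoint_seqs :: "'a set set \<Rightarrow> nat \<Rightarrow> 'a set list set" where
  "disjoint_seqs F 0 = {[]}"
| "disjoint_seqs F (Suc j) =
     (\<lambda>(xs, S). S # xs) ` (SIGMA xs:disjoint_seqs F j. {S\<in>F. S \<inter> \<Union>(set xs) = {}})"

lemma set_disjoint_seqs_subset: "xs \<in> disjoint_seqs F j \<Longrightarrow> set xs \<subseteq> F"
  by (induction j arbitrary: xs) fastforce+

lemma card_Union_disjoint_seqs:
  assumes "xs \<in> disjoint_seqs F j" "\<forall>S\<in>F. finite S \<and> card S = s"
  shows "card (\<Union>(set xs)) = j * s"
  using assms(1)
proof (induction j arbitrary: xs)
  case 0
  then show ?case by simp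
next
  case (Suc j)
  then obtain ys S where ys: "xs = S # ys" "ys \<in> disjoint_seqs F j" "S \<in> F" "S \<inter> \<Union>(set ys) = {}"
    by auto
  have "finite (\<Union>(set ys))" using set_disjoint_seqs_subset[OF ys(2)] assms(2) by auto
  then have "card (S \<union> \<Union>(set ys)) = card S + card (\<Union>(set ys))"
    using ys assms(2) by (intro card_Un_disjoint) auto
  then show ?case using ys Suc.IH assms(2) by auto
qed

lemma finite_disjoint_seqs: "finite F \<Longrightarrow> finite (disjoint_seqs F j)"
  by (induction j) auto

lemma card_disjoint_seqs_Suc:
  assumes "finite F"
  shows "card (disjoint_seqs F (Suc j)) = (\<Sum>xs\<in>disjoint_seqs F j. card {S\<in>F. S \<inter> \<Union>(set xs) = {}})"
proof -
  have "inj_on (\<lambda>(xs, S). S # xs) (SIGMA xs:disjoint_seqs F j. {S\<in>F. S \<inter> \<Union>(set xs) = {}})"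
    by (auto simp: inj_on_def)
  then have "card (disjoint_seqs F (Suc j)) = card (SIGMA xs:disjoint_seqs F j. {S\<in>F. S \<inter> \<Union>(set xs) = {}})"
    by (simp add: card_image)
  also have "\<dots> = (\<Sum>xs\<in>disjoint_seqs F j. card {S\<in>F. S \<inter> \<Union>(set xs) = {}})"
    using assms finite_disjoint_seqs[OF assms] by (intro card_SigmaI) auto
  finally show ?thesis .
qed

lemma card_disjoint_seqs_le:
  assumes "finite F"
  shows "card (disjoint_seqs F j) \<le> card F ^ j"
proof (induction j)
  case 0
  then show ?case by simp
next
  case (Suc j)
  have "card (disjoint_seqs F (Suc j)) \<le> (\<Sum>xs\<in>disjoint_seqs F j. card F)"
    unfolding card_disjoint_seqs_Suc[OF assms] using assms by (intro sum_mono card_mono) auto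
  also have "\<dots> \<le> card F ^ j * card F" using Suc by simp
  finally show ?case by (simp add: mult.commute)
qed

lemma card_disjoint_seqs_ge:
  assumes "finite F" "L \<ge> 0"
    and "\<And>i xs. i < j \<Longrightarrow> xs \<in> disjoint_seqs F i \<Longrightarrow> L \<le> real (card {S\<in>F. S \<inter> \<Union>(set xs) = {}})"
  shows "L ^ j \<le> real (card (disjoint_seqs F j))"
  using assms(3)
proof (induction j)
  case 0
  then show ?case by simp
next
  case (Suc j)
  have "L ^ j \<le> real (card (disjoint_seqs F j))"
    using Suc by (meson less_SucI)
  then have "L ^ j * L \<le> real (card (disjoint_seqs F j)) * L"
    using assms(2) by (rule mult_right_mono)
  also have "\<dots> = (\<Sum>xs\<in>disjoint_seqs F j. L)" by simp
  also have "\<dots> \<le> (\<Sum>xs\<in>disjoint_seqs F j. real (card {S\<in>F. S \<inter> \<Union>(set xs) = {}}))"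
    using Suc.prems by (intro sum_mono) auto
  also have "\<dots> = real (card (disjoint_seqs F (Suc j)))"
    using card_disjoint_seqs_Suc[OF assms(1)] by simp
  finally show ?case by (simp add: mult.commute)
qed

lemma disjoint_seqs_restrict:
  "disjoint_seqs {S\<in>F. S \<subseteq> U} j = {xs \<in> disjoint_seqs F j. \<Union>(set xs) \<subseteq> U}"
  by (induction j) force+

lemma card_subsets_meeting_le:
  assumes "finite U" "W \<subseteq> U" "0 < s"
  shows "card {S. S \<subseteq> U \<and> card S = s \<and> S \<inter> W \<noteq> {}} \<le> card W * ((card U - 1) choose (s - 1))"
proof -
  have "finite W" using assms finite_subset by blast
  have "{S. S \<subseteq> U \<and> card S = s \<and> S \<inter> W \<noteq> {}} = (\<Union>v\<in>W. {S. S \<subseteq> U \<and> card S = s \<and> {v} \<subseteq> S})"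
    by auto
  also have "card \<dots> \<le> (\<Sum>v\<in>W. card {S. S \<subseteq> U \<and> card S = s \<and> {v} \<subseteq> S})"
    using \<open>finite W\<close> by (rule card_UN_le)
  also have "\<dots> = (\<Sum>v\<in>W. (card U - 1) choose (s - 1))"
  proof (intro sum.cong refl)
    fix v assume "v \<in> W"
    then show "card {S. S \<subseteq> U \<and> card S = s \<and> {v} \<subseteq> S} = (card U - 1) choose (s - 1)"
      using card_supersets_of_card[of U "{v}" s] assms by auto
  qed
  finally show ?thesis by simp
qed

lemma card_disjoint_seqs_rich_ge:
  assumes "finite U" "F \<subseteq> {S. S \<subseteq> U \<and> card S = s}" "0 < s" "6 * j * s * s \<le> card U"
    and "2 * (card U choose s) \<le> 3 * card F"
  shows "(real (card U choose s) / 2) ^ j \<le> real (card (disjoint_seqs F j))"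
proof (rule card_disjoint_seqs_ge)
  define m C where "m = card U" and "C = card U choose s"
  show "finite F" using assms(1,2) by (simp add: finite_subset)
  show "0 \<le> real C / 2" by simp
  fix i xs assume "i < j" and xs: "xs \<in> disjoint_seqs F i"
  define W where "W = \<Union>(set xs)"
  have "W \<subseteq> U" using set_disjoint_seqs_subset[OF xs] assms(2) by (auto simp: W_def)
  have "\<forall>S\<in>F. finite S \<and> card S = s" using assms(1,2) by (auto intro: finite_subset)
  then have "card W = i * s" using card_Union_disjoint_seqs[OF xs] by (simp add: W_def)
  have "6 * i * s * s \<le> 6 * j * s * s"
    using \<open>i < j\<close> by (intro mult_le_mono1) simp
  then have small: "6 * i * s * s \<le> m" unfolding m_def using assms(4) by (rule order_trans)
  have "0 < 6 * j * s * s" using assms(3) \<open>i < j\<close> by simp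
  then have "0 < m" using assms(4) unfolding m_def by (rule order.strict_trans2)
  define meeting where "meeting = {S\<in>F. S \<inter> W \<noteq> {}}"
  have "meeting \<subseteq> {S. S \<subseteq> U \<and> card S = s \<and> S \<inter> W \<noteq> {}}"
    using assms(2) by (auto simp: meeting_def)
  then have "card meeting \<le> card {S. S \<subseteq> U \<and> card S = s \<and> S \<inter> W \<noteq> {}}"
    using assms(1) by (intro card_mono) (auto intro: finite_subset[of _ "Pow U"])
  also have "\<dots> \<le> i * s * ((m - 1) choose (s - 1))"
    using card_subsets_meeting_le[OF assms(1) \<open>W \<subseteq> U\<close> assms(3)] \<open>card W = i * s\<close> by (simp add: m_def)
  finally have "6 * card meeting * m \<le> 6 * i * s * (m * ((m - 1) choose (s - 1)))"
    by (simp add: mult_ac)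
  also have "m * ((m - 1) choose (s - 1)) = s * C"
    using binomial_absorption[of "s - 1" m] assms(3) by (simp add: C_def m_def)
  also have "6 * i * s * (s * C) = (6 * i * s * s) * C" by (simp add: mult_ac)
  also have "\<dots> \<le> m * C" using small by simp
  finally have "6 * card meeting \<le> C" using \<open>0 < m\<close> by (simp add: mult.commute)
  moreover have "card F = card {S\<in>F. S \<inter> W = {}} + card meeting"
  proof -
    have "F = {S\<in>F. S \<inter> W = {}} \<union> meeting" by (auto simp: meeting_def)
    moreover have "card ({S\<in>F. S \<inter> W = {}} \<union> meeting) = card {S\<in>F. S \<inter> W = {}} + card meeting"
      using \<open>finite F\<close> by (intro card_Un_disjoint) (auto simp: meeting_def)
    ultimately show ?thesis by simp
  qed
  ultimately have "C \<le> 2 * card {S\<in>F. S \<inter> W = {}}" using assms(5) by (simp add: C_def)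
  then show "real C / 2 \<le> real (card {S\<in>F. S \<inter> \<Union>(set xs) = {}})" by (simp add: W_def)
qed

lemma sum_card_disjoint_seqs_within:
  assumes "finite V" "F \<subseteq> {S. S \<subseteq> V \<and> card S = s}" "j * s \<le> m"
  shows "(\<Sum>U | U \<subseteq> V \<and> card U = m. card (disjoint_seqs {S\<in>F. S \<subseteq> U} j))
       = card (disjoint_seqs F j) * ((card V - j * s) choose (m - j * s))"
proof -
  have "finite F" using assms(1,2) by (simp add: finite_subset)
  have sets_of_F: "\<forall>S\<in>F. finite S \<and> card S = s" using assms(1,2) by (auto intro: finite_subset)
  have "(\<Sum>U | U \<subseteq> V \<and> card U = m. card (disjoint_seqs {S\<in>F. S \<subseteq> U} j))
      = (\<Sum>U | U \<subseteq> V \<and> card U = m. \<Sum>xs | xs \<in> disjoint_seqs F j \<and> \<Union>(set xs) \<subseteq> U. 1)"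
    by (simp add: disjoint_seqs_restrict)
  also have "\<dots> = (\<Sum>xs\<in>disjoint_seqs F j. \<Sum>U | U \<subseteq> V \<and> card U = m \<and> \<Union>(set xs) \<subseteq> U. 1)"
    using sum.swap_restrict[of "{U. U \<subseteq> V \<and> card U = m}" "disjoint_seqs F j" "\<lambda>_ _. 1::nat"
        "\<lambda>U xs. \<Union>(set xs) \<subseteq> U"] assms(1) finite_disjoint_seqs[OF \<open>finite F\<close>]
    by (simp add: conj_ac)
  also have "\<dots> = (\<Sum>xs\<in>disjoint_seqs F j. (card V - j * s) choose (m - j * s))"
  proof (intro sum.cong refl)
    fix xs assume xs: "xs \<in> disjoint_seqs F j"
    have "\<Union>(set xs) \<subseteq> V" using set_disjoint_seqs_subset[OF xs] assms(2) by auto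
    moreover have "card (\<Union>(set xs)) = j * s"
      using card_Union_disjoint_seqs[OF xs sets_of_F] .
    ultimately show "(\<Sum>U | U \<subseteq> V \<and> card U = m \<and> \<Union>(set xs) \<subseteq> U. 1) = (card V - j * s) choose (m - j * s)"
      using card_supersets_of_card[OF assms(1)] assms(3) by simp
  qed
  finally show ?thesis by simp
qed

lemma subset_prob_rich_le:
  assumes "finite V" "F \<subseteq> {S. S \<subseteq> V \<and> card S = s}" "3 * card F \<le> card V choose s"
    and "m \<le> card V" "0 < s" "0 < j" "6 * j * s * s \<le> m"
  shows "subset_prob V m (\<lambda>U. 2 * (m choose s) \<le> 3 * card {S\<in>F. S \<subseteq> U}) \<le> (2/3) ^ j"
proof -
  define n C where "n = card V" and "C = real (m choose s)"
  define Um where "Um = {U. U \<subseteq> V \<and> card U = m}"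
  define B where "B = {U. U \<subseteq> V \<and> card U = m \<and> 2 * (m choose s) \<le> 3 * card {S\<in>F. S \<subseteq> U}}"
  have "finite F" using assms(1,2) by (simp add: finite_subset)
  have "j * s \<le> 6 * j * s * s" using assms(5) by simp
  with assms(7) have "j * s \<le> m" by linarith
  moreover have "s \<le> j * s" using assms(6) by simp
  ultimately have "s \<le> m" by linarith
  then have "C > 0" by (simp add: C_def)
  have rich: "(C / 2) ^ j \<le> real (card (disjoint_seqs {S\<in>F. S \<subseteq> U} j))" if "U \<in> B" for U
  proof -
    have U: "U \<subseteq> V" "card U = m" "2 * (m choose s) \<le> 3 * card {S\<in>F. S \<subseteq> U}"
      using that by (auto simp: B_def)
    have "finite U" using U(1) assms(1) by (rule finite_subset)
    moreover have "{S\<in>F. S \<subseteq> U} \<subseteq> {S. S \<subseteq> U \<and> card S = s}" using assms(2) by blast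
    ultimately show ?thesis
      using card_disjoint_seqs_rich_ge[of U "{S\<in>F. S \<subseteq> U}" s j] assms(5,7) U by (simp add: C_def)
  qed
  have "real (card B) * (C / 2) ^ j \<le> (\<Sum>U\<in>B. real (card (disjoint_seqs {S\<in>F. S \<subseteq> U} j)))"
    using sum_mono[OF rich] by simp
  also have "\<dots> \<le> (\<Sum>U\<in>Um. real (card (disjoint_seqs {S\<in>F. S \<subseteq> U} j)))"
    using assms(1) by (intro sum_mono2) (auto simp: B_def Um_def)
  also have "\<dots> = real (card (disjoint_seqs F j)) * real ((n - j * s) choose (m - j * s))"
    using sum_card_disjoint_seqs_within[OF assms(1,2) \<open>j * s \<le> m\<close>]
    unfolding Um_def n_def by (simp flip: of_nat_sum of_nat_mult)
  also have "\<dots> \<le> (real (n choose s) / 3) ^ j * real ((n - j * s) choose (m - j * s))"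
  proof (intro mult_right_mono)
    have "real (card (disjoint_seqs F j)) \<le> real (card F) ^ j"
      using card_disjoint_seqs_le[OF \<open>finite F\<close>, of j] by (simp flip: of_nat_power)
    also have "\<dots> \<le> (real (n choose s) / 3) ^ j"
      using assms(3) by (intro power_mono) (simp_all add: n_def)
    finally show "real (card (disjoint_seqs F j)) \<le> (real (n choose s) / 3) ^ j" .
  qed simp
  also have "\<dots> = (1/3) ^ j * (real ((n - j * s) choose (m - j * s)) * real (n choose s) ^ j)"
    by (simp add: power_divide)
  also have "\<dots> \<le> (1/3) ^ j * (real (n choose m) * C ^ j)"
    using choose_superset_power_le[OF \<open>j * s \<le> m\<close>] assms(4)
    by (intro mult_left_mono) (auto simp: n_def C_def)
  also have "\<dots> = ((2/3) ^ j * real (n choose m)) * (C / 2) ^ j"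
    by (simp add: power_divide field_simps)
  finally have "real (card B) \<le> (2/3) ^ j * real (n choose m)"
    using \<open>C > 0\<close> by (simp add: mult_le_cancel_right)
  moreover have "real (n choose m) > 0" using assms(4) by (simp add: n_def)
  ultimately show ?thesis by (simp add: subset_prob_def B_def n_def field_simps)
qed

lemma subset_prob_mono:
  assumes "finite V" "\<And>U. U \<subseteq> V \<Longrightarrow> card U = k \<Longrightarrow> Q U \<Longrightarrow> R U"
  shows "subset_prob V k Q \<le> subset_prob V k R"
proof -
  have "card {U. U \<subseteq> V \<and> card U = k \<and> Q U} \<le> card {U. U \<subseteq> V \<and> card U = k \<and> R U}"
    using assms by (intro card_mono) auto
  then show ?thesis unfolding subset_prob_def by (simp add: divide_right_mono)
qed

lemma induced_is_graph: "is_graph G \<Longrightarrow> U \<subseteq> verts G \<Longrightarrow> is_graph (induced G U)"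
  unfolding is_graph_def induced_def verts_def adj_def by (auto intro: finite_subset)

lemma verts_induced [simp]: "verts (induced G U) = U"
  by (simp add: induced_def verts_def)

lemma induced_induced: "S \<subseteq> U \<Longrightarrow> induced (induced G U) S = induced G S"
  unfolding induced_def adj_def by auto

definition accepted_samples :: "graph set \<Rightarrow> nat \<Rightarrow> graph \<Rightarrow> nat set set" where
  "accepted_samples A s G = {S. S \<subseteq> verts G \<and> card S = s \<and> induced G S \<in> A}"

lemma accepted_samples_induced:
  "U \<subseteq> verts G \<Longrightarrow> accepted_samples A s (induced G U) = {S \<in> accepted_samples A s G. S \<subseteq> U}"
  by (auto simp: accepted_samples_def induced_induced)

lemma canonical_tester_accepts_rarely_if_far:
  assumes "canonical_tester P eps s A" "is_graph G" "s \<le> card (verts G)" "eps_far eps P G"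
  shows "3 * card (accepted_samples A s G) \<le> card (verts G) choose s"
proof -
  define n where "n = card (verts G)"
  define rej where "rej = {S. S \<subseteq> verts G \<and> card S = s \<and> induced G S \<notin> A}"
  have "finite (verts G)" using assms(2) by (simp add: is_graph_def)
  have "subset_prob (verts G) s (\<lambda>S. induced G S \<notin> A) \<ge> 2/3"
    using assms unfolding canonical_tester_def by blast
  moreover have "real (n choose s) > 0" using assms(3) by (simp add: n_def)
  ultimately have "3 * card rej \<ge> 2 * (n choose s)"
    unfolding subset_prob_def rej_def n_def by (simp add: field_simps flip: of_nat_mult)
  moreover have "card (accepted_samples A s G) + card rej = n choose s"
  proof -
    have "card (accepted_samples A s G) + card rej = card (accepted_samples A s G \<union> rej)"
      using \<open>finite (verts G)\<close> by (intro card_Un_disjoint[symmetric]) (auto simp: accepted_samples_def rej_def)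
    also have "accepted_samples A s G \<union> rej = {S. S \<subseteq> verts G \<and> card S = s}"
      by (auto simp: accepted_samples_def rej_def)
    finally show ?thesis using n_subsets[OF \<open>finite (verts G)\<close>] by (simp add: n_def)
  qed
  ultimately show ?thesis by (simp add: n_def)
qed

lemma canonical_tester_accepts_often_if_in:
  assumes "canonical_tester P eps s A" "is_graph G" "U \<subseteq> verts G" "s \<le> card U" "induced G U \<in> P"
  shows "2 * (card U choose s) \<le> 3 * card {S \<in> accepted_samples A s G. S \<subseteq> U}"
proof -
  have "is_graph (induced G U)" "s \<le> card (verts (induced G U))"
    using induced_is_graph[OF assms(2,3)] assms(4) by simp_all
  then have "subset_prob (verts (induced G U)) s (\<lambda>S. induced (induced G U) S \<in> A) \<ge> 2/3"
    using assms(1,5) unfolding canonical_tester_def by blast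
  moreover have "real (card U choose s) > 0" using assms(4) by simp
  ultimately show ?thesis
    using accepted_samples_induced[OF assms(3), of A s]
    by (simp add: subset_prob_def accepted_samples_def field_simps flip: of_nat_mult)
qed

lemma canonical_tester_subset_prob_in_le:
  assumes "canonical_tester P eps s A" "is_graph G" "s \<le> m"
  shows "subset_prob (verts G) m (\<lambda>U. induced G U \<in> P)
    \<le> subset_prob (verts G) m (\<lambda>U. 2 * (m choose s) \<le> 3 * card {S \<in> accepted_samples A s G. S \<subseteq> U})"
proof (rule subset_prob_mono)
  show "finite (verts G)" using assms(2) by (simp add: is_graph_def)
  fix U assume U: "U \<subseteq> verts G" "card U = m" "induced G U \<in> P"
  then show "2 * (m choose s) \<le> 3 * card {S \<in> accepted_samples A s G. S \<subseteq> U}"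
    using canonical_tester_accepts_often_if_in[OF assms(1,2) U(1) _ U(3)] assms(3) by simp
qed

theorem lemma3p1:
  "\<exists>c>0. \<exists>s0::nat. \<forall>(P::graph set) (eps::real) (s::nat) (A::graph set) (G::graph).
     graph_property P \<and> eps > 0 \<and> canonical_tester P eps s A \<and> s \<ge> s0 \<and>
     is_graph G \<and> card (verts G) \<ge> s ^ 4 \<and> eps_far eps P G \<longrightarrow>
     subset_prob (verts G) (s ^ 4) (\<lambda>U. induced G U \<in> P) \<le> exp (- c * real s)"
proof (intro exI[of _ "ln (3/2)"] conjI exI[of _ "6::nat"] allI impI)
  show "ln (3/2::real) > 0" by simp
  fix P :: "graph set" and eps :: real and s :: nat and A :: "graph set" and G :: graph
  assume "graph_property P \<and> eps > 0 \<and> canonical_tester P eps s A \<and> 6 \<le> s \<and>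
     is_graph G \<and> card (verts G) \<ge> s ^ 4 \<and> eps_far eps P G"
  then have tester: "canonical_tester P eps s A" and "6 \<le> s" and G: "is_graph G"
    and large: "s ^ 4 \<le> card (verts G)" and far: "eps_far eps P G" by auto
  have "finite (verts G)" using G by (simp add: is_graph_def)
  have "s \<le> s ^ 4" using \<open>6 \<le> s\<close> by (simp add: self_le_power)
  have "6 * s * s * s \<le> s ^ 4" using \<open>6 \<le> s\<close> by (simp add: power4_eq_xxxx)
  have "subset_prob (verts G) (s ^ 4) (\<lambda>U. induced G U \<in> P) \<le> subset_prob (verts G) (s ^ 4)
      (\<lambda>U. 2 * (s ^ 4 choose s) \<le> 3 * card {S \<in> accepted_samples A s G. S \<subseteq> U})"
    using canonical_tester_subset_prob_in_le[OF tester G \<open>s \<le> s ^ 4\<close>] .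
  also have "\<dots> \<le> (2/3) ^ s"
  proof (rule subset_prob_rich_le[OF \<open>finite (verts G)\<close>])
    show "accepted_samples A s G \<subseteq> {S. S \<subseteq> verts G \<and> card S = s}"
      by (auto simp: accepted_samples_def)
    show "3 * card (accepted_samples A s G) \<le> card (verts G) choose s"
      using canonical_tester_accepts_rarely_if_far[OF tester G _ far] \<open>s \<le> s ^ 4\<close> large by simp
  qed (use large \<open>6 \<le> s\<close> \<open>6 * s * s * s \<le> s ^ 4\<close> in simp_all)
  also have "\<dots> = exp (real s * ln (2/3))" by (simp add: exp_of_nat_mult)
  also have "real s * ln (2/3) = - ln (3/2) * real s" by (simp add: ln_div)
  finally show "subset_prob (verts G) (s ^ 4) (\<lambda>U. induced G U \<in> P) \<le> exp (- ln (3/2) * real s)" .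
qed

end
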